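(* Let $\Gamma=\mathsf{PSL}_2(\mathbb{Z})=\langle U,S\mid U^3,S^2\rangle$, with $U$ of order $3$ and $S$ of order $2$. For $n,m\ge0$ let $q(n,m)$ be the number of words in $\{U,S\}$ with exactly $n$ letters $U$ and $m$ letters $S$ that equal the identity in $\Gamma$, and let $\hat q(n,m)$ be the number of such words which in addition do not contain two consecutive letters $S$ (i.e. do not contain the factor $SS$). Set $\hat q(n,m)=0$ if an argument is negative. Then for all $n,m\ge 0$, $$q(3n,2m)=\sum_{k\ge0}\hat q(3n,2m-2k)\binom{3n+k}{k}.$$ Consequently, with $Q(x,y)=\sum_{n,m\ge0}q(n,m)x^ny^m$ and $\widehat Q(x,y)=\sum_{n,m\ge0}\hat q(3n,2m)x^{3n}y^{2m}$, $$Q(x,y)=\widehat{Q}\Big(\frac{x}{1-y^2},y\Big)\cdot\frac{1}{1-y^2}.$$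
   Context: Words are finite sequences over the alphabet $\{U,S\}$ read as products in $\Gamma$; the empty word counts as a word equal to the identity. Note $q(n,m)=\hat q(n,m)=0$ unless $3\mid n$ and $2\mid m$. *)

theory Defs
  imports Complex_Main "HOL-Library.Sublist" "HOL-Computational_Algebra.Formal_Power_Series"
begin

text \<open>The modular group Gamma = PSL_2(Z), realised concretely: 2x2 integer matrices
  (a,b,c,d) = [[a,b],[c,d]] of determinant 1, taken modulo +-I.
  Generators: S = [[0,-1],[1,0]] (order 2 in PSL_2(Z)) and U = S T = [[0,-1],[1,1]]
  (order 3 in PSL_2(Z)); these give the presentation <U,S | U^3, S^2>.\<close>

type_synonym mat2 = "int \<times> int \<times> int \<times> int"

fun mat2_mult :: "mat2 \<Rightarrow> mat2 \<Rightarrow> mat2" where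
  "mat2_mult (a,b,c,d) (e,f,g,h) = (a*e + b*g, a*f + b*h, c*e + d*g, c*f + d*h)"

definition mat2_id :: mat2 where "mat2_id = (1,0,0,1)"

datatype letter = U | S

fun letter_mat :: "letter \<Rightarrow> mat2" where
  "letter_mat U = (0,-1,1,1)"
| "letter_mat S = (0,-1,1,0)"

definition word_mat :: "letter list \<Rightarrow> mat2" where
  "word_mat w = foldr (\<lambda>x M. mat2_mult (letter_mat x) M) w mat2_id"

definition is_identity :: "letter list \<Rightarrow> bool" where
  "is_identity w \<longleftrightarrow> word_mat w = (1,0,0,1) \<or> word_mat w = (-1,0,0,-1)"

definition q :: "nat \<Rightarrow> nat \<Rightarrow> nat" where
  "q n m = card {w :: letter list. length (filter (\<lambda>x. x = U) w) = n
                   \<and> length (filter (\<lambda>x. x = S) w) = m \<and> is_identity w}"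

definition qhat :: "nat \<Rightarrow> nat \<Rightarrow> nat" where
  "qhat n m = card {w :: letter list. length (filter (\<lambda>x. x = U) w) = n
                   \<and> length (filter (\<lambda>x. x = S) w) = m \<and> is_identity w
                   \<and> \<not> sublist [S, S] w}"

definition Qgf :: "real fps fps" where
  "Qgf = Abs_fps (\<lambda>n. Abs_fps (\<lambda>m. of_nat (q n m)))"

definition Qhat_gf :: "real fps fps" where
  "Qhat_gf = Abs_fps (\<lambda>j. if 3 dvd j
       then Abs_fps (\<lambda>l. if even l then of_nat (qhat j l) else 0) else 0)"

end

theory Submission
  imports Defs
begin

unbundle fps_syntax

text \<open>A word with \<open>N\<close> letters \<open>U\<close> is \<open>S\<^sup>k\<^sub>0 U S\<^sup>k\<^sub>1 U \<dots> U S\<^sup>k\<^sub>N\<close>. Since \<open>S\<^sup>2 = -I\<close>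
  is trivial in \<open>PSL\<^sub>2(\<int>)\<close>, whether the word is trivial depends only on the parities
  \<open>e\<^sub>i = k\<^sub>i mod 2\<close>, and the word with exponents \<open>e\<^sub>i\<close> has no factor \<open>SS\<close>.
  Writing \<open>k\<^sub>i = e\<^sub>i + 2 t\<^sub>i\<close> with arbitrary \<open>t \<in> \<nat>\<^sup>N\<^sup>+\<^sup>1\<close> gives
  \<open>q(N,M) = \<Sum>\<^sub>s qhat(N,s) \<cdot> #{t : 2 \<Sum> t = M - s}\<close>, and the last factor is the coefficient of
  \<open>y\<^sup>M\<^sup>-\<^sup>s\<close> in \<open>(1 - y\<^sup>2)\<^sup>-\<^sup>(\<^sup>N\<^sup>+\<^sup>1\<^sup>)\<close>. The generating function identity needs in addition that
  \<open>qhat(n,m) = 0\<close> unless \<open>3 dvd n\<close> and \<open>2 dvd m\<close>, which follows from reducing the matrices modulo 3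
  and modulo 2.\<close>

lemma word_mat_Nil [simp]: "word_mat [] = mat2_id"
  by (simp add: word_mat_def)

lemma word_mat_Cons [simp]: "word_mat (x # w) = mat2_mult (letter_mat x) (word_mat w)"
  by (simp add: word_mat_def)

fun mat2_neg :: "mat2 \<Rightarrow> mat2" where
  "mat2_neg (a, b, c, d) = (-a, -b, -c, -d)"

definition psl_class :: "mat2 \<Rightarrow> mat2 set" where
  "psl_class A = {A, mat2_neg A}"

lemma mat2_neg_neg [simp]: "mat2_neg (mat2_neg A) = A"
  by (cases A) simp

lemma psl_class_mat2_neg [simp]: "psl_class (mat2_neg A) = psl_class A"
  by (auto simp: psl_class_def)

lemma mat2_mult_neg_right: "mat2_mult L (mat2_neg A) = mat2_neg (mat2_mult L A)"
  by (cases L; cases A) (simp add: algebra_simps)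

lemma psl_class_mat2_mult: "psl_class (mat2_mult L A) = mat2_mult L ` psl_class A"
  by (simp add: psl_class_def mat2_mult_neg_right)

lemma S_S_mult: "mat2_mult (letter_mat S) (mat2_mult (letter_mat S) A) = mat2_neg A"
  by (cases A) simp

lemma is_identity_iff_psl_class: "is_identity w \<longleftrightarrow> psl_class (word_mat w) = psl_class mat2_id"
  by (cases "word_mat w") (auto simp: is_identity_def psl_class_def mat2_id_def doubleton_eq_iff)

lemma psl_class_word_mat_append_cong:
  "psl_class (word_mat v) = psl_class (word_mat v') \<Longrightarrow> psl_class (word_mat (u @ v)) = psl_class (word_mat (u @ v'))"
  by (induction u) (simp_all add: psl_class_mat2_mult)

lemma psl_class_word_mat_replicate_S:
  "psl_class (word_mat (replicate k S @ w)) = psl_class (word_mat (replicate (k mod 2) S @ w))"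
proof (induction k rule: less_induct)
  case (less k)
  show ?case
  proof (cases "k < 2")
    case False
    then obtain j where "k = Suc (Suc j)"
      by (metis add_2_eq_Suc le_add_diff_inverse not_less)
    then have "word_mat (replicate k S @ w) = mat2_neg (word_mat (replicate j S @ w))"
      by (simp only: replicate_Suc append_Cons word_mat_Cons S_S_mult)
    with less[of j] \<open>k = Suc (Suc j)\<close> show ?thesis
      by simp
  qed simp
qed

text \<open>A word is encoded by the lengths \<open>[k\<^sub>0, \<dots>, k\<^sub>N]\<close> of the (possibly empty) blocks of \<open>S\<close>
  around its letters \<open>U\<close>.\<close>

fun word_of_runs :: "nat list \<Rightarrow> letter list" where
  "word_of_runs [] = []"
| "word_of_runs [k] = replicate k S"
| "word_of_runs (k # l # ks) = replicate k S @ U # word_of_runs (l # ks)"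

fun runs :: "letter list \<Rightarrow> nat list" where
  "runs [] = [0]"
| "runs (U # w) = 0 # runs w"
| "runs (S # w) = (case runs w of [] \<Rightarrow> [] | k # ks \<Rightarrow> Suc k # ks)"

lemma runs_Cons_S_obtain: obtains k ks where "runs w = k # ks" "runs (S # w) = Suc k # ks"
  by (induction w rule: runs.induct) (auto split: list.split)

lemma runs_neq_Nil: "runs w \<noteq> []"
  by (metis list.distinct(1) runs_Cons_S_obtain)

lemma word_of_runs_Suc: "word_of_runs (Suc k # ks) = S # word_of_runs (k # ks)"
  by (cases ks) auto

lemma word_of_runs_runs [simp]: "word_of_runs (runs w) = w"
proof (induction w rule: runs.induct)
  case (2 w)
  then show ?case by (cases "runs w") (auto simp: runs_neq_Nil)
next
  case (3 w)
  then show ?case by (metis runs_Cons_S_obtain word_of_runs_Suc)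
qed simp

lemma runs_replicate_S: "runs w = k # ks \<Longrightarrow> runs (replicate j S @ w) = (j + k) # ks"
  by (induction j) auto

lemma runs_word_of_runs [simp]: "ks \<noteq> [] \<Longrightarrow> runs (word_of_runs ks) = ks"
proof (induction ks rule: word_of_runs.induct)
  case (2 k)
  show ?case using runs_replicate_S[of "[]" 0 "[]" k] by simp
qed (auto simp: runs_replicate_S)

lemma length_runs: "length (runs w) = Suc (length (filter (\<lambda>x. x = U) w))"
  by (induction w rule: runs.induct) (auto split: list.split simp: runs_neq_Nil)

lemma sum_list_runs: "sum_list (runs w) = length (filter (\<lambda>x. x = S) w)"
  by (induction w rule: runs.induct) (auto split: list.split simp: runs_neq_Nil)

lemma not_sublist_SS_iff_runs: "\<not> sublist [S, S] w \<longleftrightarrow> (\<forall>k\<in>set (runs w). k \<le> 1)"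
proof (induction w rule: runs.induct)
  case (2 w)
  then show ?case by (simp add: sublist_Cons_right)
next
  case (3 w)
  obtain k ks where k: "runs w = k # ks" "runs (S # w) = Suc k # ks"
    by (rule runs_Cons_S_obtain)
  have "prefix [S, S] (S # w) \<longleftrightarrow> k \<ge> 1"
    using k(1) by (cases w rule: runs.cases) (auto split: list.splits)
  with 3 k show ?case by (auto simp: sublist_Cons_right)
qed simp

lemma is_identity_word_of_runs_mod_2:
  "is_identity (word_of_runs (map (\<lambda>k. k mod 2) ks)) \<longleftrightarrow> is_identity (word_of_runs ks)"
proof -
  have "psl_class (word_mat (word_of_runs ks)) = psl_class (word_mat (word_of_runs (map (\<lambda>k. k mod 2) ks)))"
  proof (induction ks rule: word_of_runs.induct)
    case (2 k)
    show ?case using psl_class_word_mat_replicate_S[of k "[]"] by simp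
  next
    case (3 k l ks)
    have "psl_class (word_mat (word_of_runs (k # l # ks)))
        = psl_class (word_mat (replicate (k mod 2) S @ U # word_of_runs (l # ks)))"
      using psl_class_word_mat_replicate_S[of k] by simp
    also have "\<dots> = psl_class (word_mat (replicate (k mod 2) S @ U # word_of_runs (map (\<lambda>k. k mod 2) (l # ks))))"
      by (rule psl_class_word_mat_append_cong) (simp add: 3 psl_class_mat2_mult del: list.map)
    also have "\<dots> = psl_class (word_mat (word_of_runs (map (\<lambda>k. k mod 2) (k # l # ks))))"
      by simp
    finally show ?case .
  qed simp
  then show ?thesis
    by (simp add: is_identity_iff_psl_class)
qed

fun mat2_mod :: "int \<Rightarrow> mat2 \<Rightarrow> mat2" where
  "mat2_mod p (a, b, c, d) = (a mod p, b mod p, c mod p, d mod p)"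

lemma mat2_mod_mult_mod: "mat2_mod p (mat2_mult L (mat2_mod p A)) = mat2_mod p (mat2_mult L A)"
  by (cases L; cases A) (auto intro!: mod_add_cong simp: mod_mult_right_eq)

lemma mat2_mod_word_mat_invariant:
  assumes "mat2_mod p mat2_id \<in> K 0"
    and "\<And>x M n. M \<in> K n \<Longrightarrow> mat2_mod p (mat2_mult (letter_mat x) M) \<in> K (if P x then Suc n else n)"
  shows "mat2_mod p (word_mat w) \<in> K (length (filter P w))"
proof (induction w)
  case (Cons x w)
  from assms(2)[OF Cons.IH, of x] show ?case
    by (cases "P x") (simp_all add: mat2_mod_mult_mod)
qed (use assms(1) in simp)

text \<open>The cosets of the quaternion subgroup of \<open>SL\<^sub>2(\<bbbF>\<^sub>3)\<close>, i.e.\ the fibres of its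
  abelianisation \<open>SL\<^sub>2(\<bbbF>\<^sub>3) \<rightarrow> \<int>/3\<close>, under which \<open>U \<mapsto> 1\<close> and \<open>S \<mapsto> 0\<close>.\<close>

definition cosets_mod_3 :: "nat \<Rightarrow> mat2 set" where
  "cosets_mod_3 n =
    [{(1,0,0,1), (2,0,0,2), (0,1,2,0), (0,2,1,0), (1,1,1,2), (1,2,2,2), (2,1,1,1), (2,2,2,1)},
     {(0,1,2,2), (0,2,1,1), (1,0,2,1), (1,1,0,1), (1,2,1,0), (2,0,1,2), (2,1,2,0), (2,2,0,2)},
     {(0,1,2,1), (0,2,1,2), (1,0,1,1), (1,1,2,0), (1,2,0,1), (2,0,2,2), (2,1,0,2), (2,2,1,0)}]
    ! (n mod 3)"

lemma cosets_mod_3_mod [simp]: "cosets_mod_3 (n mod 3) = cosets_mod_3 n"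
  by (simp add: cosets_mod_3_def)

lemma cosets_mod_3_Suc_mod [simp]: "cosets_mod_3 (Suc (n mod 3)) = cosets_mod_3 (Suc n)"
  by (simp add: cosets_mod_3_def mod_Suc_eq)

lemma cosets_mod_3_letter_mat:
  "\<forall>i\<in>{0,1,2}. \<forall>M \<in> cosets_mod_3 i. mat2_mod 3 (mat2_mult (letter_mat U) M) \<in> cosets_mod_3 (Suc i)"
  "\<forall>i\<in>{0,1,2}. \<forall>M \<in> cosets_mod_3 i. mat2_mod 3 (mat2_mult (letter_mat S) M) \<in> cosets_mod_3 i"
  unfolding cosets_mod_3_def by simp_all

lemma cosets_mod_3_step:
  assumes "M \<in> cosets_mod_3 n"
  shows "mat2_mod 3 (mat2_mult (letter_mat x) M) \<in> cosets_mod_3 (if x = U then Suc n else n)"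
proof -
  have i: "n mod 3 \<in> {0, 1, 2}"
    by auto
  from assms have M: "M \<in> cosets_mod_3 (n mod 3)"
    by simp
  show ?thesis
    using cosets_mod_3_letter_mat[rule_format, OF i M]
    by (cases x) (simp_all del: letter_mat.simps)
qed

text \<open>\<open>SL\<^sub>2(\<bbbF>\<^sub>2) \<cong> S\<^sub>3\<close>; these are the fibres of the sign character, under which
  \<open>U \<mapsto> 0\<close> and \<open>S \<mapsto> 1\<close>.\<close>

definition cosets_mod_2 :: "nat \<Rightarrow> mat2 set" where
  "cosets_mod_2 n = [{(1,0,0,1), (0,1,1,1), (1,1,1,0)}, {(0,1,1,0), (1,1,0,1), (1,0,1,1)}] ! (n mod 2)"

lemma cosets_mod_2_mod [simp]: "cosets_mod_2 (n mod 2) = cosets_mod_2 n"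
  by (simp add: cosets_mod_2_def)

lemma cosets_mod_2_Suc_mod [simp]: "cosets_mod_2 (Suc (n mod 2)) = cosets_mod_2 (Suc n)"
  by (simp add: cosets_mod_2_def mod_Suc_eq)

lemma cosets_mod_2_letter_mat:
  "\<forall>i\<in>{0,1}. \<forall>M \<in> cosets_mod_2 i. mat2_mod 2 (mat2_mult (letter_mat U) M) \<in> cosets_mod_2 i"
  "\<forall>i\<in>{0,1}. \<forall>M \<in> cosets_mod_2 i. mat2_mod 2 (mat2_mult (letter_mat S) M) \<in> cosets_mod_2 (Suc i)"
  unfolding cosets_mod_2_def by simp_all

lemma cosets_mod_2_step:
  assumes "M \<in> cosets_mod_2 n"
  shows "mat2_mod 2 (mat2_mult (letter_mat x) M) \<in> cosets_mod_2 (if x = S then Suc n else n)"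
proof -
  have i: "n mod 2 \<in> {0, 1}"
    by auto
  from assms have M: "M \<in> cosets_mod_2 (n mod 2)"
    by simp
  show ?thesis
    using cosets_mod_2_letter_mat[rule_format, OF i M]
    by (cases x) (simp_all del: letter_mat.simps)
qed

lemma cosets_mod_3_scalar_imp_dvd:
  assumes "(1, 0, 0, 1) \<in> cosets_mod_3 n \<or> (2, 0, 0, 2) \<in> cosets_mod_3 n"
  shows "3 dvd n"
proof -
  consider "n mod 3 = 0" | "n mod 3 = 1" | "n mod 3 = 2"
    by arith
  then show ?thesis
  proof cases
    case 1
    then show ?thesis by (simp add: dvd_eq_mod_eq_0)
  qed (use assms in \<open>simp_all add: cosets_mod_3_def\<close>)
qed

lemma cosets_mod_2_id_imp_even:
  assumes "(1, 0, 0, 1) \<in> cosets_mod_2 n"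
  shows "even n"
proof (rule ccontr)
  assume "odd n"
  then have "n mod 2 = 1"
    by (simp add: odd_iff_mod_2_eq_one)
  with assms show False
    by (simp add: cosets_mod_2_def)
qed

lemma is_identity_imp_3_dvd_count_U:
  assumes "is_identity w"
  shows "3 dvd length (filter (\<lambda>x. x = U) w)"
proof (rule cosets_mod_3_scalar_imp_dvd)
  have "mat2_mod 3 mat2_id \<in> cosets_mod_3 0"
    by (simp add: mat2_id_def cosets_mod_3_def)
  then have "mat2_mod 3 (word_mat w) \<in> cosets_mod_3 (length (filter (\<lambda>x. x = U) w))"
    using cosets_mod_3_step by (rule mat2_mod_word_mat_invariant)
  moreover have "mat2_mod 3 (word_mat w) = (1, 0, 0, 1) \<or> mat2_mod 3 (word_mat w) = (2, 0, 0, 2)"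
    using assms unfolding is_identity_def by auto
  ultimately show "(1, 0, 0, 1) \<in> cosets_mod_3 (length (filter (\<lambda>x. x = U) w))
      \<or> (2, 0, 0, 2) \<in> cosets_mod_3 (length (filter (\<lambda>x. x = U) w))"
    by metis
qed

lemma is_identity_imp_even_count_S:
  assumes "is_identity w"
  shows "even (length (filter (\<lambda>x. x = S) w))"
proof (rule cosets_mod_2_id_imp_even)
  have "mat2_mod 2 mat2_id \<in> cosets_mod_2 0"
    by (simp add: mat2_id_def cosets_mod_2_def)
  then have "mat2_mod 2 (word_mat w) \<in> cosets_mod_2 (length (filter (\<lambda>x. x = S) w))"
    using cosets_mod_2_step by (rule mat2_mod_word_mat_invariant)
  moreover have "mat2_mod 2 (word_mat w) = (1, 0, 0, 1)"
    using assms unfolding is_identity_def by auto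
  ultimately show "(1, 0, 0, 1) \<in> cosets_mod_2 (length (filter (\<lambda>x. x = S) w))"
    by simp
qed

lemma count_U_word_of_runs: "ks \<noteq> [] \<Longrightarrow> length (filter (\<lambda>x. x = U) (word_of_runs ks)) = length ks - 1"
  using length_runs[of "word_of_runs ks"] by simp

lemma count_S_word_of_runs: "ks \<noteq> [] \<Longrightarrow> length (filter (\<lambda>x. x = S) (word_of_runs ks)) = sum_list ks"
  using sum_list_runs[of "word_of_runs ks"] by simp

lemma card_words_eq_card_runs:
  "card {w. length (filter (\<lambda>x. x = U) w) = N \<and> length (filter (\<lambda>x. x = S) w) = M \<and> P w}
   = card {ks. length ks = Suc N \<and> sum_list ks = M \<and> P (word_of_runs ks)}"
proof (rule bij_betw_same_card[of runs], rule bij_betw_byWitness[where f' = word_of_runs])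
  show "runs ` {w. length (filter (\<lambda>x. x = U) w) = N \<and> length (filter (\<lambda>x. x = S) w) = M \<and> P w}
      \<subseteq> {ks. length ks = Suc N \<and> sum_list ks = M \<and> P (word_of_runs ks)}"
    by (auto simp: length_runs sum_list_runs)
  show "word_of_runs ` {ks. length ks = Suc N \<and> sum_list ks = M \<and> P (word_of_runs ks)}
      \<subseteq> {w. length (filter (\<lambda>x. x = U) w) = N \<and> length (filter (\<lambda>x. x = S) w) = M \<and> P w}"
  proof (rule image_subsetI)
    fix ks assume ks: "ks \<in> {ks. length ks = Suc N \<and> sum_list ks = M \<and> P (word_of_runs ks)}"
    then have "ks \<noteq> []"
      by auto
    with ks show "word_of_runs ks
        \<in> {w. length (filter (\<lambda>x. x = U) w) = N \<and> length (filter (\<lambda>x. x = S) w) = M \<and> P w}"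
      by (simp add: count_U_word_of_runs count_S_word_of_runs)
  qed
qed (auto intro!: runs_word_of_runs)

lemma q_eq_card_runs:
  "q N M = card {ks. length ks = Suc N \<and> sum_list ks = M \<and> is_identity (word_of_runs (map (\<lambda>k. k mod 2) ks))}"
  unfolding q_def card_words_eq_card_runs is_identity_word_of_runs_mod_2 ..

lemma not_sublist_SS_word_of_runs:
  "ks \<noteq> [] \<Longrightarrow> \<not> sublist [S, S] (word_of_runs ks) \<longleftrightarrow> (\<forall>k\<in>set ks. k \<le> 1)"
  using not_sublist_SS_iff_runs[of "word_of_runs ks"] by simp

lemma qhat_eq_card_runs:
  "qhat N M = card {es. length es = Suc N \<and> sum_list es = M \<and> (\<forall>e\<in>set es. e \<le> 1) \<and> is_identity (word_of_runs es)}"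
  unfolding qhat_def card_words_eq_card_runs[where P = "\<lambda>w. is_identity w \<and> \<not> sublist [S, S] w"]
proof (intro arg_cong[where f = card] Collect_cong)
  fix es :: "nat list"
  show "(length es = Suc N \<and> sum_list es = M \<and> is_identity (word_of_runs es) \<and> \<not> sublist [S, S] (word_of_runs es))
    \<longleftrightarrow> (length es = Suc N \<and> sum_list es = M \<and> (\<forall>e\<in>set es. e \<le> 1) \<and> is_identity (word_of_runs es))"
    by (cases "es = []") (auto simp: not_sublist_SS_word_of_runs)
qed

lemma finite_lists_sum_list_le: "finite {ks :: nat list. length ks = n \<and> sum_list ks \<le> M}"
proof (rule finite_subset[OF _ finite_lists_length_eq[of "{0..M}" n]])
  show "{ks. length ks = n \<and> sum_list ks \<le> M} \<subseteq> {ks. set ks \<subseteq> {0..M} \<and> length ks = n}"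
    using member_le_sum_list order_trans by fastforce
qed simp

lemma map2_mod_div_2: "map2 (\<lambda>e t. e + 2 * t) (map (\<lambda>k. k mod 2) ks) (map (\<lambda>k. k div 2) ks) = (ks :: nat list)"
  by (induction ks) auto

lemma map_mod_div_2_map2:
  assumes "length es = length ts" and "\<forall>e\<in>set es. e \<le> (1 :: nat)"
  shows "map (\<lambda>k. k mod 2) (map2 (\<lambda>e t. e + 2 * t) es ts) = es"
    and "map (\<lambda>k. k div 2) (map2 (\<lambda>e t. e + 2 * t) es ts) = ts"
  using assms by (induction es ts rule: list_induct2) auto

lemma sum_list_mod_div_2:
  "sum_list (map (\<lambda>k. k mod 2) ks) + 2 * sum_list (map (\<lambda>k. k div 2) ks) = sum_list (ks :: nat list)"
  by (induction ks) auto

lemma sum_list_map2_double: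
  "length es = length ts \<Longrightarrow> sum_list (map2 (\<lambda>e t. e + 2 * t) es ts) = sum_list es + 2 * sum_list (ts :: nat list)"
  by (induction es ts rule: list_induct2) auto

lemma card_lists_split_mod_2:
  fixes Q :: "nat list \<Rightarrow> bool"
  shows "card {ks. length ks = n \<and> sum_list ks = M \<and> Q (map (\<lambda>k. k mod 2) ks)}
    = (\<Sum>s=0..M. card {es. length es = n \<and> sum_list es = s \<and> (\<forall>e\<in>set es. e \<le> 1) \<and> Q es}
                  * card {ts. length ts = n \<and> 2 * sum_list ts = M - s})"
proof -
  define E where "E = {es. length es = n \<and> (\<forall>e\<in>set es. e \<le> 1) \<and> Q es \<and> sum_list es \<le> M}"
  define T where "T es = {ts. length ts = n \<and> 2 * sum_list ts = M - sum_list es}" for es :: "nat list"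
  have finite_E: "finite E"
    by (rule finite_subset[OF _ finite_lists_sum_list_le[of n M]]) (auto simp: E_def)
  have finite_T: "finite (T es)" for es
    by (rule finite_subset[OF _ finite_lists_sum_list_le[of n M]]) (auto simp: T_def)
  have "bij_betw (\<lambda>ks. (map (\<lambda>k. k mod 2) ks, map (\<lambda>k. k div 2) ks))
      {ks. length ks = n \<and> sum_list ks = M \<and> Q (map (\<lambda>k. k mod 2) ks)} (Sigma E T)"
  proof (rule bij_betw_byWitness[where f' = "\<lambda>(es, ts). map2 (\<lambda>e t. e + 2 * t) es ts"])
    show "(\<lambda>ks. (map (\<lambda>k. k mod 2) ks, map (\<lambda>k. k div 2) ks))
        ` {ks. length ks = n \<and> sum_list ks = M \<and> Q (map (\<lambda>k. k mod 2) ks)} \<subseteq> Sigma E T"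
    proof (rule image_subsetI)
      fix ks assume "ks \<in> {ks. length ks = n \<and> sum_list ks = M \<and> Q (map (\<lambda>k. k mod 2) ks)}"
      with sum_list_mod_div_2[of ks]
      show "(map (\<lambda>k. k mod 2) ks, map (\<lambda>k. k div 2) ks) \<in> Sigma E T"
        by (auto simp: E_def T_def)
    qed
    show "(\<lambda>(es, ts). map2 (\<lambda>e t. e + 2 * t) es ts) ` Sigma E T
        \<subseteq> {ks. length ks = n \<and> sum_list ks = M \<and> Q (map (\<lambda>k. k mod 2) ks)}"
      by (auto simp: E_def T_def map_mod_div_2_map2 sum_list_map2_double simp del: map_map)
  qed (auto simp: E_def T_def map2_mod_div_2 map_mod_div_2_map2 simp del: map_map)
  then have "card {ks. length ks = n \<and> sum_list ks = M \<and> Q (map (\<lambda>k. k mod 2) ks)} = card (Sigma E T)"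
    by (rule bij_betw_same_card)
  also have "\<dots> = (\<Sum>es\<in>E. card (T es))"
    using finite_E finite_T by simp
  also have "\<dots> = (\<Sum>s=0..M. \<Sum>es\<in>{es \<in> E. sum_list es = s}. card (T es))"
    by (rule sum.group[symmetric]) (use finite_E in \<open>auto simp: E_def\<close>)
  also have "\<dots> = (\<Sum>s=0..M. card {es. length es = n \<and> sum_list es = s \<and> (\<forall>e\<in>set es. e \<le> 1) \<and> Q es}
                  * card {ts. length ts = n \<and> 2 * sum_list ts = M - s})"
  proof (rule sum.cong[OF refl])
    fix s assume "s \<in> {0..M}"
    then have "{es \<in> E. sum_list es = s} = {es. length es = n \<and> sum_list es = s \<and> (\<forall>e\<in>set es. e \<le> 1) \<and> Q es}"
      by (auto simp: E_def)
    then show "(\<Sum>es\<in>{es \<in> E. sum_list es = s}. card (T es)) = card {es. length es = n \<and> sum_list es = s \<and> (\<forall>e\<in>set es. e \<le> 1) \<and> Q es}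
                  * card {ts. length ts = n \<and> 2 * sum_list ts = M - s}"
      by (simp add: T_def)
  qed
  finally show ?thesis .
qed

text \<open>The coefficient of \<open>y\<^sup>j\<close> in \<open>(1 - y\<^sup>2)\<^sup>-\<^sup>(\<^sup>n\<^sup>+\<^sup>1\<^sup>)\<close>.\<close>

definition even_binomial :: "nat \<Rightarrow> nat \<Rightarrow> nat" where
  "even_binomial n j = (if even j then (n + j div 2) choose (j div 2) else 0)"

lemma card_lists_double_sum_list:
  "card {ts :: nat list. length ts = Suc n \<and> 2 * sum_list ts = j} = even_binomial n j"
proof (cases "even j")
  case True
  then have "{ts :: nat list. length ts = Suc n \<and> 2 * sum_list ts = j}
      = {ts. length ts = Suc n \<and> sum_list ts = j div 2}"
    by auto
  then show ?thesis
    using True by (simp add: card_length_sum_list even_binomial_def add.commute)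
next
  case False
  then have "{ts :: nat list. length ts = Suc n \<and> 2 * sum_list ts = j} = {}"
    by auto
  with False show ?thesis
    by (metis card.empty even_binomial_def)
qed

lemma q_eq_convolution: "q N M = (\<Sum>s=0..M. qhat N s * even_binomial N (M - s))"
  unfolding q_eq_card_runs card_lists_split_mod_2[where Q = "\<lambda>es. is_identity (word_of_runs es)"]
    qhat_eq_card_runs card_lists_double_sum_list ..

lemma sum_atLeast0_atMost_double:
  fixes f :: "nat \<Rightarrow> 'a :: comm_monoid_add"
  assumes "\<And>i. odd i \<Longrightarrow> f i = 0"
  shows "(\<Sum>i=0..2*m. f i) = (\<Sum>k\<le>m. f (2*k))"
  by (induction m) (simp_all add: assms)

lemma q_even_eq_sum: "q N (2*m) = (\<Sum>k\<le>m. qhat N (2*m - 2*k) * (N + k choose k))"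
proof -
  have "q N (2*m) = (\<Sum>i=0..2*m. qhat N (2*m - i) * even_binomial N i)"
    unfolding q_eq_convolution by (subst sum.atLeastAtMost_rev) (intro sum.cong; auto)
  also have "\<dots> = (\<Sum>k\<le>m. qhat N (2*m - 2*k) * even_binomial N (2*k))"
    by (rule sum_atLeast0_atMost_double) (simp add: even_binomial_def)
  finally show ?thesis
    by (simp add: even_binomial_def)
qed

lemma fps_mult_one_minus_X2_nth:
  "(f * (1 - fps_X ^ 2 :: 'a :: comm_ring_1 fps)) $ j = f $ j - (if j < 2 then 0 else f $ (j - 2))"
  by (simp add: algebra_simps fps_X_power_mult_right_nth)

lemma even_binomial_fps_mult_one_minus_X2:
  "Abs_fps (\<lambda>j. of_nat (even_binomial 0 j)) * (1 - fps_X ^ 2 :: 'a :: comm_ring_1 fps) = 1"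
  "Abs_fps (\<lambda>j. of_nat (even_binomial (Suc n) j)) * (1 - fps_X ^ 2 :: 'a :: comm_ring_1 fps)
     = Abs_fps (\<lambda>j. of_nat (even_binomial n j))"
proof -
  show "Abs_fps (\<lambda>j. of_nat (even_binomial 0 j)) * (1 - fps_X ^ 2 :: 'a fps) = 1"
  proof (rule fps_ext)
    fix j
    show "(Abs_fps (\<lambda>j. of_nat (even_binomial 0 j)) * (1 - fps_X ^ 2 :: 'a fps)) $ j = 1 $ j"
      by (cases "j < 2") (auto simp: fps_mult_one_minus_X2_nth even_binomial_def)
  qed
  show "Abs_fps (\<lambda>j. of_nat (even_binomial (Suc n) j)) * (1 - fps_X ^ 2 :: 'a fps)
     = Abs_fps (\<lambda>j. of_nat (even_binomial n j))"
  proof (rule fps_ext)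
    fix j
    show "(Abs_fps (\<lambda>j. of_nat (even_binomial (Suc n) j)) * (1 - fps_X ^ 2 :: 'a fps)) $ j
      = Abs_fps (\<lambda>j. of_nat (even_binomial n j)) $ j"
    proof (cases "j < 2")
      case False
      then obtain i where j: "j = i + 2"
        by (metis add.commute le_Suc_ex not_less)
      have "even_binomial (Suc n) (i + 2) = even_binomial (Suc n) i + even_binomial n (i + 2)"
        by (auto simp: even_binomial_def)
      then show ?thesis
        using j by (simp add: fps_mult_one_minus_X2_nth)
    qed (auto simp: fps_mult_one_minus_X2_nth even_binomial_def)
  qed
qed

lemma inverse_one_minus_X2_power:
  "inverse (1 - fps_X ^ 2 :: 'a :: field fps) ^ Suc n = Abs_fps (\<lambda>j. of_nat (even_binomial n j))"
proof -
  define C where "C = inverse (1 - fps_X ^ 2 :: 'a fps)"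
  have cancel: "A = D * C" if "A * (1 - fps_X ^ 2) = D" for A D
  proof -
    have "A = A * ((1 - fps_X ^ 2) * C)"
      unfolding C_def by (subst inverse_mult_eq_1') simp_all
    also have "\<dots> = D * C"
      by (simp add: that mult.assoc [symmetric])
    finally show ?thesis .
  qed
  show ?thesis
    unfolding C_def [symmetric]
  proof (induction n)
    case 0
    show ?case
      using cancel[OF even_binomial_fps_mult_one_minus_X2(1)] by simp
  next
    case (Suc n)
    show ?case
      using cancel[OF even_binomial_fps_mult_one_minus_X2(2)] Suc by simp
  qed
qed

lemma qhat_eq_0: "\<not> (3 dvd n \<and> even l) \<Longrightarrow> qhat n l = 0"
  unfolding qhat_def using is_identity_imp_3_dvd_count_U is_identity_imp_even_count_S
  by (subst Collect_empty_eq [THEN iffD2]) auto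

lemma Qhat_gf_nth: "Qhat_gf $ n = Abs_fps (\<lambda>l. of_nat (qhat n l))"
  unfolding Qhat_gf_def by (rule fps_ext) (auto simp: qhat_eq_0)

lemma Qgf_eq_compose_Qhat_gf:
  "Qgf = fps_compose Qhat_gf (fps_const (inverse (1 - fps_X ^ 2)) * fps_X) * fps_const (inverse (1 - fps_X ^ 2))"
proof (rule fps_ext)
  fix n
  define C where "C = inverse (1 - fps_X ^ 2 :: real fps)"
  have "(fps_compose Qhat_gf (fps_const C * fps_X) * fps_const C) $ n = C ^ n * Qhat_gf $ n * C"
    by (simp add: fps_compose_linear)
  also have "\<dots> = Qhat_gf $ n * C ^ Suc n"
    by (simp add: algebra_simps)
  also have "\<dots> = Qgf $ n"
  proof (rule fps_ext)
    fix M
    show "(Qhat_gf $ n * C ^ Suc n) $ M = Qgf $ n $ M"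
      unfolding C_def inverse_one_minus_X2_power
      by (simp add: Qhat_gf_nth fps_mult_nth Qgf_def q_eq_convolution)
  qed
  finally show "Qgf $ n = (fps_compose Qhat_gf (fps_const (inverse (1 - fps_X ^ 2)) * fps_X)
      * fps_const (inverse (1 - fps_X ^ 2))) $ n"
    by (simp add: C_def)
qed

theorem proposition2:
  shows "(\<forall>n m :: nat. q (3*n) (2*m) = (\<Sum>k\<le>m. qhat (3*n) (2*m - 2*k) * ((3*n + k) choose k)))
    \<and> Qgf = fps_compose Qhat_gf (fps_const (inverse (1 - fps_X ^ 2)) * fps_X)
             * fps_const (inverse (1 - fps_X ^ 2))"
  using q_even_eq_sum Qgf_eq_compose_Qhat_gf by blast

end
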